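(* Let $X\in\mathbb{R}^{n\times D}$ and $Y\in\mathbb{R}^{n\times m}$ with $D>n\geq r:=\mathrm{rank}(X)$, and let $h\ge\min\{m,D\}$ be a positive integer. Write the compact SVD $X=W\begin{bmatrix}\Sigma_x^{1/2} & 0\end{bmatrix}\begin{bmatrix}\Phi_1^T\\ \Phi_2^T\end{bmatrix}$ with $W\in\mathbb{R}^{n\times r}$ having orthonormal columns, $\Sigma_x\in\mathbb{R}^{r\times r}$ diagonal with positive diagonal, $\Phi_1\in\mathbb{R}^{D\times r}$, $\Phi_2\in\mathbb{R}^{D\times(D-r)}$, $[\Phi_1\ \Phi_2]$ orthogonal. Let $E(V,U_1)=W^TY-\Sigma_x^{1/2}U_1V^T$ and let $(V(t),U_1(t),U_2(t))\in\mathbb{R}^{m\times h}\times\mathbb{R}^{r\times h}\times\mathbb{R}^{(D-r)\times h}$, $t\ge0$, solve $$\dot V=E^T\Sigma_x^{1/2}U_1,\qquad \dot U_1=\Sigma_x^{1/2}EV,\qquad \dot U_2=0,$$ with $E=E(V(t),U_1(t))$, starting from some $(V(0),U_1(0),U_2(0))$. Let $U(t)=\Phi_1U_1(t)+\Phi_2U_2(t)$. Assume that $(V(t),U_1(t))$ converges as $t\to\infty$ to some equilibrium point $(V(\infty),U_1(\infty))$ with $E(V(\infty),U_1(\infty))=0$, and set $U(\infty)=\Phi_1U_1(\infty)+\Phi_2U_2(0)$. If the initialization satisfies $$V(0)U_2(0)^T=0,\qquad U_1(0)U_2(0)^T=0,$$ then $U(\infty)V(\infty)^T=\hat\Theta$,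 where $\hat\Theta=X^T(XX^T)^\dagger Y$.
   Context: The dynamics above are the gradient flow of $\mathcal{L}(V,U)=\frac12\|Y-XUV^T\|_F^2$ written in coordinates $U=\Phi_1U_1+\Phi_2U_2$. $(\cdot)^\dagger$ denotes the Moore–Penrose pseudoinverse; $\hat\Theta$ is the minimum-norm solution of $\min_{\Theta}\|Y-X\Theta\|_F^2$. *)

theory Defs
  imports "HOL-Analysis.Analysis"
begin

definition is_pinv :: "real^'m^'n \<Rightarrow> real^'n^'m \<Rightarrow> bool" where
  "is_pinv A B \<longleftrightarrow> A ** B ** A = A \<and> B ** A ** B = B \<and>
     transpose (A ** B) = A ** B \<and> transpose (B ** A) = B ** A"

definition pinv :: "real^'m^'n \<Rightarrow> real^'n^'m" where
  "pinv A = (THE B. is_pinv A B)"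

definition pos_diag :: "real^'r^'r \<Rightarrow> bool" where
  "pos_diag S \<longleftrightarrow> (\<forall>i j. i \<noteq> j \<longrightarrow> S $ i $ j = 0) \<and> (\<forall>i. S $ i $ i > 0)"

text \<open>Entrywise square root; for a positive diagonal matrix this is its principal square root.\<close>
definition diag_sqrt :: "real^'r^'r \<Rightarrow> real^'r^'r" where
  "diag_sqrt S = (\<chi> i j. sqrt (S $ i $ j))"

definition resid :: "real^'r^'n \<Rightarrow> real^'m^'n \<Rightarrow> real^'r^'r \<Rightarrow> real^'h^'m \<Rightarrow> real^'h^'r \<Rightarrow> real^'m^'r" where
  "resid W Y Sx V U1 = transpose W ** Y - diag_sqrt Sx ** U1 ** transpose V"

end

theory Submission
  imports Defs
begin

text \<open>With \<open>Q = U\<^sub>2(0)\<close>, the products \<open>A = V Q\<^sup>T\<close> and \<open>B = U\<^sub>1 Q\<^sup>T\<close> obey the linear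
  system \<open>A' = E\<^sup>T \<Sigma>\<^sup>1\<^sup>/\<^sup>2 B\<close>, \<open>B' = \<Sigma>\<^sup>1\<^sup>/\<^sup>2 E A\<close> with zero initial values, so by a Gronwall
  argument they vanish for all time. Hence \<open>V(\<infinity>) Q\<^sup>T = 0\<close> and the \<open>\<Phi>\<^sub>2 U\<^sub>2(0)\<close> part of
  \<open>U(\<infinity>)\<close> contributes nothing. The equilibrium condition \<open>E = 0\<close> gives
  \<open>U\<^sub>1(\<infinity>) V(\<infinity>)\<^sup>T = \<Sigma>\<^sup>-\<^sup>1\<^sup>/\<^sup>2 W\<^sup>T Y\<close>, and \<open>\<Phi>\<^sub>1 \<Sigma>\<^sup>-\<^sup>1\<^sup>/\<^sup>2 W\<^sup>T Y\<close> is the minimum-norm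
  solution because \<open>W \<Sigma>\<^sup>-\<^sup>1 W\<^sup>T\<close> satisfies the Penrose conditions for \<open>X X\<^sup>T = W \<Sigma> W\<^sup>T\<close>.\<close>

lemma bounded_bilinear_matrix_matrix_mult [bounded_bilinear]:
  "bounded_bilinear ((**) :: real^'m^'n \<Rightarrow> real^'k^'m \<Rightarrow> real^'k^'n)"
  unfolding bilinear_conv_bounded_bilinear[symmetric] bilinear_def
  by (auto intro!: linearI simp: matrix_add_ldistrib matrix_scalar_ac scalar_matrix_assoc
      vec_eq_iff matrix_matrix_mult_def sum.distrib sum_distrib_left algebra_simps)

lemma bounded_linear_transpose [bounded_linear]:
  "bounded_linear (transpose :: real^'m^'n \<Rightarrow> real^'n^'m)"
  unfolding linear_conv_bounded_linear[symmetric]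
  by (auto intro!: linearI simp: transpose_def vec_eq_iff)

lemma has_vector_derivative_imp_continuous_on_atLeast:
  "(\<And>t. a \<le> t \<Longrightarrow> (f has_vector_derivative f' t) (at t within {a..})) \<Longrightarrow> continuous_on {a..} f"
  unfolding has_vector_derivative_def by (rule has_derivative_continuous_on) simp

lemma vanishes_if_derivative_norm_le:
  fixes Z :: "real \<Rightarrow> 'a::real_inner"
  assumes deriv: "\<And>t. 0 \<le> t \<Longrightarrow> (Z has_vector_derivative Z' t) (at t within {0..})"
    and growth: "\<And>t. 0 \<le> t \<Longrightarrow> t \<le> T \<Longrightarrow> norm (Z' t) \<le> K * norm (Z t)"
    and "Z 0 = 0" "0 \<le> T"
  shows "Z T = 0"
proof -
  define g where "g t = exp (- 2 * K * t) * (Z t \<bullet> Z t)" for t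
  have "continuous_on {0..} Z"
    using deriv by (rule has_vector_derivative_imp_continuous_on_atLeast)
  then have cont_g: "continuous_on {0..T} g"
    unfolding g_def by (auto intro!: continuous_intros elim: continuous_on_subset)
  have "g T \<le> g 0"
  proof (rule DERIV_nonpos_imp_decreasing_open[OF \<open>0 \<le> T\<close> _ cont_g])
    fix t assume t: "0 < t" "t < T"
    have "(Z has_vector_derivative Z' t) (at t)"
      using deriv[of t] t at_within_interior[of t "{0..}"] by simp
    then have "((\<lambda>t. Z t \<bullet> Z t) has_real_derivative 2 * (Z t \<bullet> Z' t)) (at t)"
      using bounded_bilinear.has_vector_derivative[OF bounded_bilinear_inner]
      by (fastforce simp: has_real_derivative_iff_has_vector_derivative inner_commute)
    then have "(g has_real_derivative
        exp (- 2 * K * t) * (2 * (Z t \<bullet> Z' t) - 2 * K * (Z t \<bullet> Z t))) (at t)"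
      unfolding g_def by (auto intro!: derivative_eq_intros simp: algebra_simps)
    moreover have "Z t \<bullet> Z' t \<le> K * (Z t \<bullet> Z t)"
      using norm_cauchy_schwarz[of "Z t" "Z' t"] growth[of t] t
        mult_left_mono[of "norm (Z' t)" "K * norm (Z t)" "norm (Z t)"]
      by (simp add: power2_norm_eq_inner[symmetric] power2_eq_square algebra_simps)
    ultimately show "\<exists>y. (g has_real_derivative y) (at t) \<and> y \<le> 0"
      by (auto simp: mult_nonneg_nonpos)
  qed
  then show ?thesis
    using \<open>Z 0 = 0\<close> inner_ge_zero[of "Z T"] by (simp add: g_def mult_le_0_iff)
qed

lemma coupled_matrix_ode_vanishes:
  fixes A :: "real \<Rightarrow> real^'q^'m" and B :: "real \<Rightarrow> real^'q^'r"
    and F :: "real \<Rightarrow> real^'r^'m" and G :: "real \<Rightarrow> real^'m^'r"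
  assumes dA: "\<And>t. 0 \<le> t \<Longrightarrow> (A has_vector_derivative F t ** B t) (at t within {0..})"
    and dB: "\<And>t. 0 \<le> t \<Longrightarrow> (B has_vector_derivative G t ** A t) (at t within {0..})"
    and cont: "continuous_on {0..} F" "continuous_on {0..} G"
    and init: "A 0 = 0" "B 0 = 0" and "0 \<le> T"
  shows "A T = 0 \<and> B T = 0"
proof -
  obtain KF where "KF \<ge> 0"
    and KF: "\<And>(a :: real^'r^'m) (b :: real^'q^'r). norm (a ** b) \<le> norm a * norm b * KF"
    using bounded_bilinear.nonneg_bounded[OF bounded_bilinear_matrix_matrix_mult] by blast
  obtain KG where "KG \<ge> 0"
    and KG: "\<And>(a :: real^'m^'r) (b :: real^'q^'m). norm (a ** b) \<le> norm a * norm b * KG"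
    using bounded_bilinear.nonneg_bounded[OF bounded_bilinear_matrix_matrix_mult] by blast
  have "continuous_on {0..T} F" "continuous_on {0..T} G"
    using cont by (auto elim: continuous_on_subset)
  then obtain MF MG where "MF \<ge> 0" and MF: "\<And>t. t \<in> {0..T} \<Longrightarrow> norm (F t) \<le> MF"
    and "MG \<ge> 0" and MG: "\<And>t. t \<in> {0..T} \<Longrightarrow> norm (G t) \<le> MG"
    by (metis compact_Icc continuous_on_compact_bound)
  have "(A T, B T) = 0"
  proof (rule vanishes_if_derivative_norm_le[where K = "MF * KF + MG * KG"])
    show "((\<lambda>t. (A t, B t)) has_vector_derivative (F t ** B t, G t ** A t)) (at t within {0..})"
      if "0 \<le> t" for t
      using dA[OF that] dB[OF that] by (rule has_vector_derivative_Pair)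
    show "norm (F t ** B t, G t ** A t) \<le> (MF * KF + MG * KG) * norm (A t, B t)"
      if "0 \<le> t" "t \<le> T" for t
    proof -
      have tT: "t \<in> {0..T}" using that by simp
      have "norm (F t ** B t) \<le> norm (F t) * norm (B t) * KF" by (rule KF)
      also have "\<dots> \<le> MF * norm (A t, B t) * KF"
        by (intro mult_right_mono mult_mono MF[OF tT] norm_snd_le \<open>MF \<ge> 0\<close> \<open>KF \<ge> 0\<close> norm_ge_zero)
      finally have "norm (F t ** B t) \<le> MF * norm (A t, B t) * KF" .
      moreover have "norm (G t ** A t) \<le> norm (G t) * norm (A t) * KG" by (rule KG)
      moreover have "\<dots> \<le> MG * norm (A t, B t) * KG"
        by (intro mult_right_mono mult_mono MG[OF tT] norm_fst_le \<open>MG \<ge> 0\<close> \<open>KG \<ge> 0\<close> norm_ge_zero)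
      ultimately show ?thesis
        using norm_Pair_le[of "F t ** B t" "G t ** A t"] by (simp add: algebra_simps)
    qed
  qed (simp_all add: init zero_prod_def \<open>0 \<le> T\<close>)
  then show ?thesis by (simp add: zero_prod_def)
qed

lemma pos_diag_diag_sqrt:
  assumes "pos_diag S"
  shows "transpose (diag_sqrt S) = diag_sqrt S" "invertible (diag_sqrt S)"
proof -
  have off_diag: "diag_sqrt S $ i $ j = 0" if "i \<noteq> j" for i j
    using assms that by (simp add: pos_diag_def diag_sqrt_def)
  then show "transpose (diag_sqrt S) = diag_sqrt S"
    by (simp add: vec_eq_iff transpose_def) (metis off_diag)
  have "det (diag_sqrt S) = (\<Prod>i\<in>UNIV. sqrt (S $ i $ i))"
    using det_diagonal[OF off_diag] by (simp add: diag_sqrt_def)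
  also have "\<dots> \<noteq> 0"
    using assms by (simp add: pos_diag_def less_imp_neq[symmetric])
  finally show "invertible (diag_sqrt S)"
    by (simp add: invertible_det_nz)
qed

lemma is_pinv_unique:
  assumes "is_pinv A B" "is_pinv A C"
  shows "B = C"
proof -
  have a1: "A ** B ** A = A" "B ** A ** B = B" "transpose (A ** B) = A ** B" "transpose (B ** A) = B ** A"
    using assms(1) unfolding is_pinv_def by auto
  have a2: "A ** C ** A = A" "C ** A ** C = C" "transpose (A ** C) = A ** C" "transpose (C ** A) = C ** A"
    using assms(2) unfolding is_pinv_def by auto
  have "B = B ** (A ** B)" using a1 by (simp add: matrix_mul_assoc)
  also have "\<dots> = B ** transpose (A ** C ** A ** B)" using a1 a2 by simp
  also have "\<dots> = B ** (transpose (A ** B) ** transpose (A ** C))"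
    by (simp add: matrix_transpose_mul matrix_mul_assoc)
  also have "\<dots> = B ** A ** B ** A ** C" using a1 a2 by (simp add: matrix_mul_assoc)
  also have "\<dots> = B ** A ** C" using a1 by simp
  finally have b: "B = B ** A ** C" .
  have cab: "C ** A ** B ** A = C ** A" by (metis a1(1) matrix_mul_assoc)
  have "C = (C ** A) ** C" using a2 by (simp add: matrix_mul_assoc)
  also have "\<dots> = transpose (C ** A ** B ** A) ** C" using a2 cab by simp
  also have "\<dots> = (transpose (B ** A) ** transpose (C ** A)) ** C"
    by (simp add: matrix_transpose_mul matrix_mul_assoc)
  also have "\<dots> = (B ** A) ** (C ** A ** C)" by (simp only: a1(4) a2(4) matrix_mul_assoc)
  also have "\<dots> = B ** A ** C" using a2 by simp
  finally show ?thesis using b by simp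
qed

lemma pinv_eqI: "is_pinv A B \<Longrightarrow> pinv A = B"
  unfolding pinv_def using is_pinv_unique by blast

lemma min_norm_solution_compact_svd:
  fixes W :: "real^'r^'n" and S Si :: "real^'r^'r" and Phi :: "real^'r^'D" and Y :: "real^'m^'n"
  assumes W_orth: "transpose W ** W = mat 1" and Phi_orth: "transpose Phi ** Phi = mat 1"
    and S_inv: "S ** Si = mat 1" "Si ** S = mat 1" and S_sym: "transpose S = S"
    and svd: "X = W ** S ** transpose Phi"
  shows "transpose X ** pinv (X ** transpose X) ** Y = Phi ** Si ** transpose W ** Y"
proof -
  have cancel: "M ** S ** Si = M" "M ** Si ** S = M" "M ** transpose W ** W = M"
    "M ** transpose Phi ** Phi = M" for M :: "real^'r^'a"
    by (metis S_inv W_orth Phi_orth matrix_mul_assoc matrix_mul_rid)+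
  have "transpose Si ** S = mat 1"
    by (metis S_inv(1) S_sym matrix_transpose_mul transpose_mat)
  then have Si_sym: "transpose Si = Si"
    by (metis cancel(1) matrix_mul_lid matrix_mul_assoc)
  have gram: "X ** transpose X = W ** S ** S ** transpose W"
    by (simp add: svd matrix_transpose_mul matrix_mul_assoc S_sym Si_sym cancel)
  have "is_pinv (X ** transpose X) (W ** Si ** Si ** transpose W)"
    unfolding is_pinv_def gram by (simp add: matrix_transpose_mul matrix_mul_assoc S_sym Si_sym cancel)
  then have pinv_gram: "pinv (X ** transpose X) = W ** Si ** Si ** transpose W"
    by (rule pinv_eqI)
  have "transpose X = Phi ** S ** transpose W"
    by (simp add: svd matrix_transpose_mul matrix_mul_assoc S_sym)
  then have "transpose X ** pinv (X ** transpose X) ** Y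
      = Phi ** S ** transpose W ** W ** Si ** Si ** transpose W ** Y"
    unfolding pinv_gram by (simp only: matrix_mul_assoc)
  also have "\<dots> = Phi ** Si ** transpose W ** Y"
    by (simp only: cancel(1,3))
  finally show ?thesis .
qed

lemma tendsto_matrix_mult_right_eq_0:
  fixes f :: "'a \<Rightarrow> real^'k^'m" and M :: "real^'l^'k"
  assumes "(f \<longlongrightarrow> L) F" "F \<noteq> bot" "\<forall>\<^sub>F t in F. f t ** M = 0"
  shows "L ** M = 0"
proof (rule tendsto_unique[OF \<open>F \<noteq> bot\<close>])
  show "((\<lambda>t. f t ** M) \<longlongrightarrow> L ** M) F"
    using assms(1) by (intro tendsto_intros)
  show "((\<lambda>t. f t ** M) \<longlongrightarrow> 0) F"
    using assms(3) by (rule tendsto_eventually)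
qed

lemma flow_preserves_orthogonality:
  fixes V :: "real \<Rightarrow> real^'h^'m" and U1 :: "real \<Rightarrow> real^'h^'r" and Q :: "real^'h^'q"
  assumes odeV: "\<And>t. t \<ge> 0 \<Longrightarrow> (V has_vector_derivative
                   (transpose (resid W Y Sx (V t) (U1 t)) ** diag_sqrt Sx ** U1 t)) (at t within {0..})"
      and odeU1: "\<And>t. t \<ge> 0 \<Longrightarrow> (U1 has_vector_derivative
                   (diag_sqrt Sx ** resid W Y Sx (V t) (U1 t) ** V t)) (at t within {0..})"
      and init: "V 0 ** transpose Q = 0" "U1 0 ** transpose Q = 0" and "0 \<le> T"
  shows "V T ** transpose Q = 0 \<and> U1 T ** transpose Q = 0"
proof (rule coupled_matrix_ode_vanishes[where
      A = "\<lambda>t. V t ** transpose Q" and B = "\<lambda>t. U1 t ** transpose Q"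
      and F = "\<lambda>t. transpose (resid W Y Sx (V t) (U1 t)) ** diag_sqrt Sx"
      and G = "\<lambda>t. diag_sqrt Sx ** resid W Y Sx (V t) (U1 t)"])
  note has_vector_derivative_imp_continuous_on_atLeast[OF odeV]
    has_vector_derivative_imp_continuous_on_atLeast[OF odeU1]
  then show "continuous_on {0..} (\<lambda>t. transpose (resid W Y Sx (V t) (U1 t)) ** diag_sqrt Sx)"
    "continuous_on {0..} (\<lambda>t. diag_sqrt Sx ** resid W Y Sx (V t) (U1 t))"
    unfolding resid_def by (auto intro!: continuous_intros)
  fix t :: real assume "0 \<le> t"
  show "((\<lambda>t. V t ** transpose Q) has_vector_derivative
      (transpose (resid W Y Sx (V t) (U1 t)) ** diag_sqrt Sx) ** (U1 t ** transpose Q)) (at t within {0..})"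
    using bounded_bilinear.has_vector_derivative[OF bounded_bilinear_matrix_matrix_mult
        odeV[OF \<open>0 \<le> t\<close>] has_vector_derivative_const[of "transpose Q"]]
    by (simp add: matrix_mul_assoc)
  show "((\<lambda>t. U1 t ** transpose Q) has_vector_derivative
      (diag_sqrt Sx ** resid W Y Sx (V t) (U1 t)) ** (V t ** transpose Q)) (at t within {0..})"
    using bounded_bilinear.has_vector_derivative[OF bounded_bilinear_matrix_matrix_mult
        odeU1[OF \<open>0 \<le> t\<close>] has_vector_derivative_const[of "transpose Q"]]
    by (simp add: matrix_mul_assoc)
qed (use init \<open>0 \<le> T\<close> in auto)

theorem proposition1:
  fixes X :: "real^'D^'n" and Y :: "real^'m^'n"
    and W :: "real^'r^'n" and Sx :: "real^'r^'r"
    and Phi1 :: "real^'r^'D" and Phi2 :: "real^'q^'D"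
    and V :: "real \<Rightarrow> real^'h^'m" and U1 :: "real \<Rightarrow> real^'h^'r" and U2 :: "real \<Rightarrow> real^'h^'q"
    and Vinf :: "real^'h^'m" and U1inf :: "real^'h^'r"
  assumes dims: "CARD('D) > CARD('n)" "CARD('r) = rank X" "CARD('q) = CARD('D) - CARD('r)"
      and hdim: "CARD('h) \<ge> min CARD('m) CARD('D)"
      and W_orth: "transpose W ** W = mat 1"
      and Sx_diag: "pos_diag Sx"
      and Phi_orth: "transpose Phi1 ** Phi1 = mat 1" "transpose Phi2 ** Phi2 = mat 1"
                    "transpose Phi1 ** Phi2 = 0"
                    "Phi1 ** transpose Phi1 + Phi2 ** transpose Phi2 = mat 1"
      and svd: "X = W ** diag_sqrt Sx ** transpose Phi1"
      and odeV: "\<And>t. t \<ge> 0 \<Longrightarrow> (V has_vector_derivative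
                   (transpose (resid W Y Sx (V t) (U1 t)) ** diag_sqrt Sx ** U1 t)) (at t within {0..})"
      and odeU1: "\<And>t. t \<ge> 0 \<Longrightarrow> (U1 has_vector_derivative
                   (diag_sqrt Sx ** resid W Y Sx (V t) (U1 t) ** V t)) (at t within {0..})"
      and odeU2: "\<And>t. t \<ge> 0 \<Longrightarrow> (U2 has_vector_derivative 0) (at t within {0..})"
      and convV: "(V \<longlongrightarrow> Vinf) at_top"
      and convU1: "(U1 \<longlongrightarrow> U1inf) at_top"
      and equil: "resid W Y Sx Vinf U1inf = 0"
      and init: "V 0 ** transpose (U2 0) = 0" "U1 0 ** transpose (U2 0) = 0"
  shows "(Phi1 ** U1inf + Phi2 ** U2 0) ** transpose Vinf = transpose X ** pinv (X ** transpose X) ** Y"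
proof -
  define S where "S = diag_sqrt Sx"
  obtain Si where S_inv: "S ** Si = mat 1" "Si ** S = mat 1"
    using pos_diag_diag_sqrt(2)[OF Sx_diag] unfolding S_def invertible_def by blast
  have "\<forall>\<^sub>F t in at_top. V t ** transpose (U2 0) = 0"
    by (rule eventually_mono[OF eventually_ge_at_top[of 0]])
      (use flow_preserves_orthogonality[OF odeV odeU1 init] in blast)
  then have Vinf_orth: "Vinf ** transpose (U2 0) = 0"
    by (rule tendsto_matrix_mult_right_eq_0[OF convV trivial_limit_at_top_linorder])
  have "U2 0 ** transpose Vinf = transpose (Vinf ** transpose (U2 0))"
    by (simp add: matrix_transpose_mul)
  then have U2_Vinf: "U2 0 ** transpose Vinf = 0"
    using Vinf_orth linear_0[OF bounded_linear.linear[OF bounded_linear_transpose]] by simp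
  have "transpose W ** Y = S ** U1inf ** transpose Vinf"
    using equil by (simp add: resid_def S_def)
  then have "U1inf ** transpose Vinf = Si ** transpose W ** Y"
    by (metis S_inv(2) matrix_mul_assoc matrix_mul_lid)
  then have "(Phi1 ** U1inf + Phi2 ** U2 0) ** transpose Vinf = Phi1 ** Si ** transpose W ** Y"
    by (simp add: bounded_bilinear.add_left[OF bounded_bilinear_matrix_matrix_mult] U2_Vinf
        flip: matrix_mul_assoc)
  also have "\<dots> = transpose X ** pinv (X ** transpose X) ** Y"
    by (rule min_norm_solution_compact_svd[symmetric, OF W_orth Phi_orth(1) S_inv
        pos_diag_diag_sqrt(1)[OF Sx_diag, folded S_def] svd[folded S_def]])
  finally show ?thesis .
qed

end
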